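(* Let $(\Gamma(-),X)$ be a connected graph of groups with fundamental group $\Gamma$, and suppose that $X$ has only finitely many vertices. Then there exist a graph of groups $(\Delta(-),Y)$ with $|V(Y)|<\infty$ and a spanning tree $T$ in $Y$ such that $\pi_1(\Delta(-),Y)\cong\Gamma$ and \[ \Delta(e)^e\neq\Delta(t(e))\quad\text{and}\quad \Delta(e)^{\bar e}\neq \Delta(o(e))\qquad\text{for all } e\in E(T). \] Moreover, if $(\Gamma(-),X)$ satisfies the finiteness condition $(F_1)$: $X$ is a finite graph, or the finiteness condition $(F_2)$: $\Gamma(v)$ is finite for every vertex $v\in V(X)$, then $(\Delta(-),Y)$ may be chosen so as to enjoy the same property.
   Context: Graphs are in the sense of Serre: a graph $X$ consists of a vertex set $V(X)$, a set $E(X)$ of directed edges with a fixed-point-free involution $e\mapsto\bar e$, and maps $o,t:E(X)\to V(X)$ (origin, terminus) with $t(\bar e)=o(e)$; loops and multiple edges are allowed. A graph of groups $(\Gamma(-),X)$ assigns to each vertex $v$ a group $\Gamma(v)$ and to each edge $e$ a group $\Gamma(e)$ with $\Gamma(\bar e)=\Gamma(e)$, together with monomorphisms $\Gamma(e)\to\Gamma(t(e))$, $a\mapsto a^e$; for $a\in\Gamma(e)$, $a^{\bar e}\in\Gamma(o(e))$ denotes the image under the monomorphism attached to $\bar e$. We write $\Gamma(e)^e$ and $\Gamma(e)^{\bar e}$ for the images of $\Gamma(e)$ in $\Gamma(t(e))$ and $\Gamma(o(e))$. $\pi_1(\Gamma(-),X)$ denotes the fundamental group of the graph of groups (Bass–Serre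 theory). *)

theory Defs
  imports "HOL-Algebra.Group"
begin

record ('v, 'e, 'g) graph_of_groups =
  verts :: "'v set"
  edges :: "'e set"
  rev   :: "'e \<Rightarrow> 'e"
  src   :: "'e \<Rightarrow> 'v"
  tgt   :: "'e \<Rightarrow> 'v"
  vgrp  :: "'v \<Rightarrow> 'g monoid"
  egrp  :: "'e \<Rightarrow> 'g monoid"
  emb   :: "'e \<Rightarrow> 'g \<Rightarrow> 'g"    (* a |-> a^e : Gamma(e) -> Gamma(t(e)) *)

definition is_graph_of_groups :: "('v, 'e, 'g) graph_of_groups \<Rightarrow> bool" where
  "is_graph_of_groups X \<longleftrightarrow>
     (\<forall>e\<in>edges X.
        rev X e \<in> edges X \<and> rev X e \<noteq> e \<and> rev X (rev X e) = e \<and>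
        src X e \<in> verts X \<and> tgt X e \<in> verts X \<and> tgt X (rev X e) = src X e \<and>
        group (egrp X e) \<and> egrp X (rev X e) = egrp X e \<and>
        emb X e \<in> hom (egrp X e) (vgrp X (tgt X e)) \<and>
        inj_on (emb X e) (carrier (egrp X e))) \<and>
     (\<forall>v\<in>verts X. group (vgrp X v))"

fun is_path :: "('v, 'e, 'g) graph_of_groups \<Rightarrow> 'e set \<Rightarrow> 'v \<Rightarrow> 'e list \<Rightarrow> 'v \<Rightarrow> bool" where
  "is_path X S u [] w \<longleftrightarrow> u = w \<and> u \<in> verts X"
| "is_path X S u (e # es) w \<longleftrightarrow> e \<in> S \<and> src X e = u \<and> is_path X S (tgt X e) es w"

definition reduced_path :: "('v, 'e, 'g) graph_of_groups \<Rightarrow> 'e list \<Rightarrow> bool" where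
  "reduced_path X es \<longleftrightarrow> successively (\<lambda>a b. b \<noteq> rev X a) es"

definition connected_gog :: "('v, 'e, 'g) graph_of_groups \<Rightarrow> bool" where
  "connected_gog X \<longleftrightarrow> verts X \<noteq> {} \<and>
     (\<forall>u\<in>verts X. \<forall>w\<in>verts X. \<exists>es. is_path X (edges X) u es w)"

definition spanning_tree :: "('v, 'e, 'g) graph_of_groups \<Rightarrow> 'e set \<Rightarrow> bool" where
  "spanning_tree X T \<longleftrightarrow> T \<subseteq> edges X \<and> (\<forall>e\<in>T. rev X e \<in> T) \<and>
     verts X \<noteq> {} \<and>
     (\<forall>u\<in>verts X. \<forall>w\<in>verts X. \<exists>es. is_path X T u es w) \<and>
     \<not> (\<exists>v es. es \<noteq> [] \<and> is_path X T v es v \<and> reduced_path X es)"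

datatype ('v, 'e, 'g) letter = VL 'v 'g | EL 'e

definition valid_letter :: "('v, 'e, 'g) graph_of_groups \<Rightarrow> ('v, 'e, 'g) letter \<Rightarrow> bool" where
  "valid_letter X l = (case l of VL v g \<Rightarrow> v \<in> verts X \<and> g \<in> carrier (vgrp X v)
                                | EL e \<Rightarrow> e \<in> edges X)"

definition valid_word :: "('v, 'e, 'g) graph_of_groups \<Rightarrow> ('v, 'e, 'g) letter list \<Rightarrow> bool" where
  "valid_word X w \<longleftrightarrow> (\<forall>l\<in>set w. valid_letter X l)"

inductive fg_rel :: "('v, 'e, 'g) graph_of_groups \<Rightarrow> 'e set \<Rightarrow>
     ('v, 'e, 'g) letter list \<Rightarrow> ('v, 'e, 'g) letter list \<Rightarrow> bool"
  for X T where
  vmult: "\<lbrakk>v \<in> verts X; g \<in> carrier (vgrp X v); h \<in> carrier (vgrp X v)\<rbrakk>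
            \<Longrightarrow> fg_rel X T [VL v g, VL v h] [VL v (g \<otimes>\<^bsub>vgrp X v\<^esub> h)]"
| vone: "v \<in> verts X \<Longrightarrow> fg_rel X T [VL v \<one>\<^bsub>vgrp X v\<^esub>] []"
| einv: "e \<in> edges X \<Longrightarrow> fg_rel X T [EL e, EL (rev X e)] []"
| econj: "\<lbrakk>e \<in> edges X; a \<in> carrier (egrp X e)\<rbrakk>
            \<Longrightarrow> fg_rel X T [EL e, VL (tgt X e) (emb X e a), EL (rev X e)]
                           [VL (src X e) (emb X (rev X e) a)]"
| etree: "e \<in> T \<Longrightarrow> fg_rel X T [EL e] []"

inductive fg_eq :: "('v, 'e, 'g) graph_of_groups \<Rightarrow> 'e set \<Rightarrow>
     ('v, 'e, 'g) letter list \<Rightarrow> ('v, 'e, 'g) letter list \<Rightarrow> bool"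
  for X T where
  refl: "valid_word X w \<Longrightarrow> fg_eq X T w w"
| sym: "fg_eq X T a b \<Longrightarrow> fg_eq X T b a"
| trans: "\<lbrakk>fg_eq X T a b; fg_eq X T b c\<rbrakk> \<Longrightarrow> fg_eq X T a c"
| rel: "\<lbrakk>fg_rel X T a b; valid_word X u; valid_word X w\<rbrakk>
          \<Longrightarrow> fg_eq X T (u @ a @ w) (u @ b @ w)"

definition fund_group :: "('v, 'e, 'g) graph_of_groups \<Rightarrow> 'e set \<Rightarrow>
     ('v, 'e, 'g) letter list set monoid" where
  "fund_group X T =
     \<lparr> carrier = {{w'. fg_eq X T w w'} | w. valid_word X w},
       mult = (\<lambda>A B. {w. \<exists>a\<in>A. \<exists>b\<in>B. fg_eq X T (a @ b) w}),
       one = {w. fg_eq X T [] w} \<rparr>"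

definition F1 :: "('v, 'e, 'g) graph_of_groups \<Rightarrow> bool" where
  "F1 X \<longleftrightarrow> finite (verts X) \<and> finite (edges X)"

definition F2 :: "('v, 'e, 'g) graph_of_groups \<Rightarrow> bool" where
  "F2 X \<longleftrightarrow> (\<forall>v\<in>verts X. finite (carrier (vgrp X v)))"

end

theory Submission
  imports Defs
begin

text \<open>Call a tree edge \<open>e\<close> surjective if \<open>\<Gamma>(e)\<^sup>e = \<Gamma>(t(e))\<close>; since \<open>T\<close> is closed under
  reversal, an edge violating the conclusion is, up to reversal, a surjective tree edge.
  Such an edge is not a loop, and contracting it (deleting \<open>t(e)\<close>, \<open>e\<close> and \<open>\<bar>e\<close>, and rerouting
  every other edge at \<open>t(e)\<close> to \<open>o(e)\<close> through the monomorphism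
  \<open>\<Gamma>(t(e)) \<cong> \<Gamma>(e) \<rightarrow> \<Gamma>(o(e))\<close>) leaves the fundamental group unchanged: in the presentation,
  \<open>e = 1\<close> and \<open>e a\<^sup>e \<bar>e = a\<^sup>\<bar>\<^sup>e\<close> identify every generator of \<open>\<Gamma>(t(e))\<close> with its image in
  \<open>\<Gamma>(o(e))\<close>. The contraction keeps all vertex and edge groups, so it preserves (F1) and (F2),
  and it removes a vertex; as \<open>V(X)\<close> is finite, repeated contraction ends in the required
  graph of groups.\<close>

subsection \<open>Graphs of groups, paths and spanning trees\<close>

lemma graph_of_groupsD:
  assumes "is_graph_of_groups X" and "e \<in> edges X"
  shows "rev X e \<in> edges X" "rev X e \<noteq> e" "rev X (rev X e) = e"
    "src X e \<in> verts X" "tgt X e \<in> verts X"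
    "tgt X (rev X e) = src X e" "src X (rev X e) = tgt X e"
    "group (egrp X e)" "egrp X (rev X e) = egrp X e"
    "emb X e \<in> hom (egrp X e) (vgrp X (tgt X e))" "inj_on (emb X e) (carrier (egrp X e))"
proof -
  have "\<forall>f\<in>edges X. rev X f \<in> edges X \<and> rev X f \<noteq> f \<and> rev X (rev X f) = f \<and>
      src X f \<in> verts X \<and> tgt X f \<in> verts X \<and> tgt X (rev X f) = src X f \<and>
      group (egrp X f) \<and> egrp X (rev X f) = egrp X f \<and>
      emb X f \<in> hom (egrp X f) (vgrp X (tgt X f)) \<and> inj_on (emb X f) (carrier (egrp X f))"
    using assms(1) unfolding is_graph_of_groups_def by blast
  then show "rev X e \<in> edges X" "rev X e \<noteq> e" "rev X (rev X e) = e"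
    "src X e \<in> verts X" "tgt X e \<in> verts X" "tgt X (rev X e) = src X e"
    "src X (rev X e) = tgt X e" "group (egrp X e)" "egrp X (rev X e) = egrp X e"
    "emb X e \<in> hom (egrp X e) (vgrp X (tgt X e))" "inj_on (emb X e) (carrier (egrp X e))"
    using assms(2) by metis+
qed

lemma graph_of_groups_vertex_group:
  "is_graph_of_groups X \<Longrightarrow> v \<in> verts X \<Longrightarrow> group (vgrp X v)"
  unfolding is_graph_of_groups_def by blast

lemma graph_of_groups_rev_eq_iff:
  "is_graph_of_groups X \<Longrightarrow> f \<in> edges X \<Longrightarrow> g \<in> edges X \<Longrightarrow> rev X f = g \<longleftrightarrow> f = rev X g"
  using graph_of_groupsD(3) by metis

lemma is_path_append:
  "is_path X S u p m \<Longrightarrow> is_path X S m q w \<Longrightarrow> is_path X S u (p @ q) w"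
  by (induction p arbitrary: u) auto

lemma is_path_end: "is_path X S u p w \<Longrightarrow> w \<in> verts X"
  by (induction p arbitrary: u) auto

lemma is_path_edges: "is_path X S u p w \<Longrightarrow> set p \<subseteq> S"
  by (induction p arbitrary: u) auto

lemma spanning_treeD:
  "spanning_tree X T \<Longrightarrow> T \<subseteq> edges X"
  "spanning_tree X T \<Longrightarrow> e \<in> T \<Longrightarrow> rev X e \<in> T"
  unfolding spanning_tree_def by auto

lemma spanning_tree_src_ne_tgt:
  assumes "is_graph_of_groups X" "spanning_tree X T" "e \<in> T"
  shows "src X e \<noteq> tgt X e"
proof
  assume loop: "src X e = tgt X e"
  have "is_path X T (src X e) [e] (src X e)"
    using assms loop graph_of_groupsD(5) spanning_treeD(1) by fastforce
  moreover have "reduced_path X [e]" by (simp add: reduced_path_def)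
  ultimately show False using assms(2) unfolding spanning_tree_def by blast
qed

subsection \<open>Words and the fundamental group\<close>

lemma valid_word_Nil[simp]: "valid_word X []"
  by (simp add: valid_word_def)

lemma valid_word_Cons[simp]: "valid_word X (l # w) \<longleftrightarrow> valid_letter X l \<and> valid_word X w"
  by (simp add: valid_word_def)

lemma valid_word_append[simp]: "valid_word X (u @ w) \<longleftrightarrow> valid_word X u \<and> valid_word X w"
  by (auto simp add: valid_word_def)

lemma valid_letter_simps[simp]:
  "valid_letter X (VL v g) \<longleftrightarrow> v \<in> verts X \<and> g \<in> carrier (vgrp X v)"
  "valid_letter X (EL e) \<longleftrightarrow> e \<in> edges X"
  by (simp_all add: valid_letter_def)

lemma fg_rel_valid:
  assumes gog: "is_graph_of_groups X" and "T \<subseteq> edges X" and "fg_rel X T a b"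
  shows "valid_word X a \<and> valid_word X b"
  using assms(3)
proof cases
  case (vmult v g h)
  then show ?thesis using graph_of_groups_vertex_group[OF gog]
    by (auto intro: monoid.m_closed group.is_monoid)
next
  case (vone v)
  then show ?thesis using graph_of_groups_vertex_group[OF gog]
    by (auto intro: monoid.one_closed group.is_monoid)
next
  case (einv e)
  then show ?thesis using graph_of_groupsD[OF gog] by auto
next
  case (econj e x)
  have "emb X (rev X e) \<in> hom (egrp X e) (vgrp X (src X e))"
    using graph_of_groupsD[OF gog econj(3)] graph_of_groupsD(10)[OF gog, of "rev X e"] by metis
  then show ?thesis
    using econj graph_of_groupsD[OF gog econj(3)] by (auto simp: hom_def Pi_def)
next
  case (etree e)
  then show ?thesis using assms(2) by auto
qed

lemma fg_eq_valid:
  assumes "is_graph_of_groups X" "T \<subseteq> edges X" "fg_eq X T a b"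
  shows "valid_word X a \<and> valid_word X b"
  using assms(3) by induction (use fg_rel_valid[OF assms(1,2)] in auto)

lemma fg_eq_of_rel: "fg_rel X T a b \<Longrightarrow> fg_eq X T a b"
  using fg_eq.rel[of X T a b "[]" "[]"] by simp

lemma fg_eq_cong:
  assumes "fg_eq X T a b" "valid_word X u" "valid_word X w"
  shows "fg_eq X T (u @ a @ w) (u @ b @ w)"
  using assms
proof (induction arbitrary: u w)
  case (refl w0)
  then show ?case by (intro fg_eq.refl) simp
next
  case (sym a b)
  then show ?case by (blast intro: fg_eq.sym)
next
  case (trans a b c)
  then show ?case by (blast intro: fg_eq.trans)
next
  case (rel a b u0 w0)
  then show ?case using fg_eq.rel[of X T a b "u @ u0" "w0 @ w"] by simp
qed

lemma fg_eq_append: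
  assumes gog: "is_graph_of_groups X" and "T \<subseteq> edges X"
    and "fg_eq X T a a'" "fg_eq X T b b'"
  shows "fg_eq X T (a @ b) (a' @ b')"
proof -
  have "valid_word X a'" "valid_word X b"
    using fg_eq_valid[OF gog assms(2)] assms(3,4) by auto
  then have "fg_eq X T ([] @ a @ b) ([] @ a' @ b)" "fg_eq X T (a' @ b @ []) (a' @ b' @ [])"
    by (intro fg_eq_cong assms(3,4); simp)+
  then show ?thesis by (auto intro: fg_eq.trans)
qed

definition fg_class where "fg_class X T w = {w'. fg_eq X T w w'}"

lemma fg_class_eq_iff:
  assumes "valid_word X w" "valid_word X w'"
  shows "fg_class X T w = fg_class X T w' \<longleftrightarrow> fg_eq X T w w'"
proof
  assume "fg_class X T w = fg_class X T w'"
  moreover have "w' \<in> fg_class X T w'" using assms by (simp add: fg_class_def fg_eq.refl)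
  ultimately have "w' \<in> fg_class X T w" by simp
  then show "fg_eq X T w w'" by (simp add: fg_class_def)
next
  assume "fg_eq X T w w'"
  then show "fg_class X T w = fg_class X T w'"
    unfolding fg_class_def by (blast intro: fg_eq.sym fg_eq.trans)
qed

lemma carrier_fund_group: "carrier (fund_group X T) = {fg_class X T w | w. valid_word X w}"
  by (simp add: fund_group_def fg_class_def)

lemma fund_group_mult_fg_class:
  assumes gog: "is_graph_of_groups X" and TE: "T \<subseteq> edges X"
    and "valid_word X u" "valid_word X w"
  shows "fg_class X T u \<otimes>\<^bsub>fund_group X T\<^esub> fg_class X T w = fg_class X T (u @ w)"
proof -
  have "{w'. \<exists>a\<in>fg_class X T u. \<exists>b\<in>fg_class X T w. fg_eq X T (a @ b) w'} = fg_class X T (u @ w)"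
  proof safe
    fix w' a b assume "a \<in> fg_class X T u" "b \<in> fg_class X T w" "fg_eq X T (a @ b) w'"
    then show "w' \<in> fg_class X T (u @ w)" unfolding fg_class_def
      using fg_eq_append[OF gog TE] by (blast intro: fg_eq.trans)
  next
    fix w' assume "w' \<in> fg_class X T (u @ w)"
    moreover have "u \<in> fg_class X T u" "w \<in> fg_class X T w"
      using assms(3,4) by (simp_all add: fg_class_def fg_eq.refl)
    ultimately show "\<exists>a\<in>fg_class X T u. \<exists>b\<in>fg_class X T w. fg_eq X T (a @ b) w'"
      by (auto simp: fg_class_def)
  qed
  then show ?thesis by (simp add: fund_group_def)
qed

lemma fg_eq_map:
  assumes F_append: "\<And>u w. F (u @ w) = F u @ F w"
    and F_valid: "\<And>w. valid_word X w \<Longrightarrow> valid_word Y (F w)"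
    and F_rel: "\<And>a b. fg_rel X T a b \<Longrightarrow> fg_eq Y T' (F a) (F b)"
    and gog: "is_graph_of_groups X" and TE: "T \<subseteq> edges X"
    and "fg_eq X T a b"
  shows "fg_eq Y T' (F a) (F b)"
  using assms(6)
proof induction
  case (refl w)
  then show ?case by (intro fg_eq.refl F_valid)
next
  case (sym a b)
  then show ?case by (blast intro: fg_eq.sym)
next
  case (trans a b c)
  then show ?case by (blast intro: fg_eq.trans)
next
  case (rel a b u w)
  then show ?case using fg_rel_valid[OF gog TE rel(1)]
    by (simp add: F_append fg_eq_cong F_rel F_valid)
qed

lemma fund_group_iso_by_word_maps:
  assumes gogX: "is_graph_of_groups X" and TX: "T \<subseteq> edges X"
    and gogY: "is_graph_of_groups Y" and TY: "T' \<subseteq> edges Y"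
    and F_valid: "\<And>w. valid_word X w \<Longrightarrow> valid_word Y (F w)"
    and F_eq: "\<And>a b. fg_eq X T a b \<Longrightarrow> fg_eq Y T' (F a) (F b)"
    and F_append: "\<And>u w. F (u @ w) = F u @ F w"
    and G_valid: "\<And>w. valid_word Y w \<Longrightarrow> valid_word X (G w)"
    and G_eq: "\<And>a b. fg_eq Y T' a b \<Longrightarrow> fg_eq X T (G a) (G b)"
    and GF: "\<And>w. valid_word X w \<Longrightarrow> fg_eq X T (G (F w)) w"
    and FG: "\<And>w. valid_word Y w \<Longrightarrow> fg_eq Y T' (F (G w)) w"
  shows "fund_group X T \<cong> fund_group Y T'"
proof -
  define h where "h A = {w'. \<exists>w\<in>A. fg_eq Y T' (F w) w'}" for A
  have h_class: "h (fg_class X T w) = fg_class Y T' (F w)" if "valid_word X w" for w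
  proof -
    have "w \<in> fg_class X T w" using that by (simp add: fg_class_def fg_eq.refl)
    then show ?thesis unfolding h_def fg_class_def using F_eq by (blast intro: fg_eq.trans)
  qed
  have hom: "h \<in> hom (fund_group X T) (fund_group Y T')"
  proof (rule homI)
    fix A assume "A \<in> carrier (fund_group X T)"
    then show "h A \<in> carrier (fund_group Y T')"
      using h_class F_valid by (auto simp: carrier_fund_group)
  next
    fix A B assume "A \<in> carrier (fund_group X T)" "B \<in> carrier (fund_group X T)"
    then obtain u w where "A = fg_class X T u" "valid_word X u" "B = fg_class X T w" "valid_word X w"
      by (auto simp: carrier_fund_group)
    then show "h (A \<otimes>\<^bsub>fund_group X T\<^esub> B) = h A \<otimes>\<^bsub>fund_group Y T'\<^esub> h B"
      by (simp add: fund_group_mult_fg_class[OF gogX TX] fund_group_mult_fg_class[OF gogY TY]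
          h_class F_valid F_append)
  qed
  have inj: "inj_on h (carrier (fund_group X T))"
  proof (rule inj_onI)
    fix A B assume "A \<in> carrier (fund_group X T)" "B \<in> carrier (fund_group X T)" "h A = h B"
    then obtain u w where uw: "A = fg_class X T u" "valid_word X u" "B = fg_class X T w" "valid_word X w"
      and "fg_class Y T' (F u) = fg_class Y T' (F w)"
      by (auto simp: carrier_fund_group h_class)
    then have "fg_eq X T (G (F u)) (G (F w))" using fg_class_eq_iff F_valid G_eq by blast
    then have "fg_eq X T u w" using GF uw by (blast intro: fg_eq.trans fg_eq.sym)
    then show "A = B" using uw fg_class_eq_iff by blast
  qed
  have "carrier (fund_group Y T') \<subseteq> h ` carrier (fund_group X T)"
  proof
    fix C assume "C \<in> carrier (fund_group Y T')"
    then obtain w where w: "C = fg_class Y T' w" "valid_word Y w" by (auto simp: carrier_fund_group)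
    then have "h (fg_class X T (G w)) = C"
      using h_class G_valid fg_class_eq_iff FG F_valid by metis
    then show "C \<in> h ` carrier (fund_group X T)"
      using G_valid w by (auto simp: carrier_fund_group)
  qed
  then have "h ` carrier (fund_group X T) = carrier (fund_group Y T')"
    using hom by (auto simp: hom_def Pi_def)
  then show ?thesis
    by (intro is_isoI[of h]) (simp add: iso_def hom bij_betw_def inj)
qed

subsection \<open>Contracting a tree edge\<close>

definition contract_vertex :: "('v, 'e, 'g) graph_of_groups \<Rightarrow> 'e \<Rightarrow> 'v \<Rightarrow> 'v" where
  "contract_vertex X e v = (if v = tgt X e then src X e else v)"

lemma contract_vertex_simps[simp]:
  "contract_vertex X e (tgt X e) = src X e"
  "v \<noteq> tgt X e \<Longrightarrow> contract_vertex X e v = v"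
  by (simp_all add: contract_vertex_def)

text \<open>The map \<open>a\<^sup>e \<mapsto> a\<^sup>\<bar>\<^sup>e\<close>, a homomorphism \<open>\<Gamma>(t(e)) \<rightarrow> \<Gamma>(o(e))\<close> when \<open>\<Gamma>(e)\<^sup>e = \<Gamma>(t(e))\<close>.\<close>

definition contract_transfer :: "('v, 'e, 'g) graph_of_groups \<Rightarrow> 'e \<Rightarrow> 'g \<Rightarrow> 'g" where
  "contract_transfer X e = emb X (rev X e) \<circ> inv_into (carrier (egrp X e)) (emb X e)"

definition contract_elem :: "('v, 'e, 'g) graph_of_groups \<Rightarrow> 'e \<Rightarrow> 'v \<Rightarrow> 'g \<Rightarrow> 'g" where
  "contract_elem X e v = (if v = tgt X e then contract_transfer X e else id)"

definition contract :: "('v, 'e, 'g) graph_of_groups \<Rightarrow> 'e \<Rightarrow> ('v, 'e, 'g) graph_of_groups" where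
  "contract X e = \<lparr>verts = verts X - {tgt X e}, edges = edges X - {e, rev X e}, rev = rev X,
     src = (\<lambda>f. contract_vertex X e (src X f)), tgt = (\<lambda>f. contract_vertex X e (tgt X f)),
     vgrp = vgrp X, egrp = egrp X, emb = (\<lambda>f. contract_elem X e (tgt X f) \<circ> emb X f)\<rparr>"

lemma contract_simps[simp]:
  "verts (contract X e) = verts X - {tgt X e}"
  "edges (contract X e) = edges X - {e, rev X e}"
  "rev (contract X e) = rev X"
  "src (contract X e) f = contract_vertex X e (src X f)"
  "tgt (contract X e) f = contract_vertex X e (tgt X f)"
  "vgrp (contract X e) = vgrp X"
  "egrp (contract X e) = egrp X"
  "emb (contract X e) f = contract_elem X e (tgt X f) \<circ> emb X f"
  by (simp_all add: contract_def)

fun project_letter :: "('v, 'e, 'g) graph_of_groups \<Rightarrow> 'e \<Rightarrow> ('v, 'e, 'g) letter \<Rightarrow> ('v, 'e, 'g) letter list" where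
  "project_letter X e (VL v g) = [VL (contract_vertex X e v) (contract_elem X e v g)]"
| "project_letter X e (EL f) = (if f = e \<or> f = rev X e then [] else [EL f])"

definition project_word :: "('v, 'e, 'g) graph_of_groups \<Rightarrow> 'e \<Rightarrow> ('v, 'e, 'g) letter list \<Rightarrow> ('v, 'e, 'g) letter list" where
  "project_word X e w = concat (map (project_letter X e) w)"

lemma project_word_simps[simp]:
  "project_word X e [] = []"
  "project_word X e (l # w) = project_letter X e l @ project_word X e w"
  "project_word X e (u @ w) = project_word X e u @ project_word X e w"
  by (simp_all add: project_word_def)

text \<open>Paths of the contracted graph are lifted by inserting, where needed, the edge \<open>e\<close> or \<open>\<bar>e\<close>
  between consecutive edges.\<close>

definition contracted_step :: "('v, 'e, 'g) graph_of_groups \<Rightarrow> 'e \<Rightarrow> 'v \<Rightarrow> 'v \<Rightarrow> 'e list" where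
  "contracted_step X e x y = (if x = y then [] else if x = src X e then [e] else [rev X e])"

fun lift_edges :: "('v, 'e, 'g) graph_of_groups \<Rightarrow> 'e \<Rightarrow> 'v \<Rightarrow> 'e list \<Rightarrow> 'e list" where
  "lift_edges X e x [] = []"
| "lift_edges X e x (f # fs) = contracted_step X e x (src X f) @ f # lift_edges X e (tgt X f) fs"

locale surjective_tree_edge =
  fixes X :: "('v, 'e, 'g) graph_of_groups" and T :: "'e set" and e :: 'e
  assumes gog: "is_graph_of_groups X" and tree: "spanning_tree X T" and e_in_tree: "e \<in> T"
    and surj: "emb X e ` carrier (egrp X e) = carrier (vgrp X (tgt X e))"
begin

abbreviation "X' \<equiv> contract X e"
abbreviation "T' \<equiv> T - {e, rev X e}"

lemmas edgeD = graph_of_groupsD[OF gog]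

lemma tree_edges: "T \<subseteq> edges X" "T' \<subseteq> edges X'"
  using spanning_treeD(1)[OF tree] by auto

lemma e_edges: "e \<in> edges X" "rev X e \<in> edges X" "rev X e \<in> T"
  using e_in_tree tree_edges spanning_treeD(2)[OF tree] by auto

lemma src_ne_tgt: "src X e \<noteq> tgt X e"
  using spanning_tree_src_ne_tgt[OF gog tree e_in_tree] .

lemma ends_verts: "src X e \<in> verts X'" "tgt X e \<in> verts X"
  using edgeD(4,5)[OF e_edges(1)] src_ne_tgt by auto

lemma contract_vertex_verts: "v \<in> verts X \<Longrightarrow> contract_vertex X e v \<in> verts X'"
  using ends_verts by (auto simp: contract_vertex_def)

lemma rev_ne_e: "f \<in> edges X \<Longrightarrow> f \<notin> {e, rev X e} \<Longrightarrow> rev X f \<noteq> e \<and> rev X f \<noteq> rev X e"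
  using graph_of_groups_rev_eq_iff[OF gog, of f e] graph_of_groups_rev_eq_iff[OF gog, of f "rev X e"]
    edgeD(3)[OF e_edges(1)] e_edges by auto

lemma emb_rev_e: "emb X (rev X e) \<in> hom (egrp X e) (vgrp X (src X e))"
  "inj_on (emb X (rev X e)) (carrier (egrp X e))"
  using edgeD[OF e_edges(2)] edgeD(3)[OF e_edges(1)] by metis+

lemma emb_e_iso: "emb X e \<in> iso (egrp X e) (vgrp X (tgt X e))"
  using edgeD(10,11)[OF e_edges(1)] surj by (simp add: iso_iff)

lemma contract_transfer_hom: "contract_transfer X e \<in> hom (vgrp X (tgt X e)) (vgrp X (src X e))"
proof -
  have "inv_into (carrier (egrp X e)) (emb X e) \<in> iso (vgrp X (tgt X e)) (egrp X e)"
    using group.iso_set_sym[OF edgeD(8)[OF e_edges(1)] emb_e_iso] .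
  then show ?thesis
    unfolding contract_transfer_def using hom_compose emb_rev_e(1) by (blast dest: iso_imp_homomorphism)
qed

lemma contract_transfer_inj: "inj_on (contract_transfer X e) (carrier (vgrp X (tgt X e)))"
proof -
  have "bij_betw (inv_into (carrier (egrp X e)) (emb X e)) (carrier (vgrp X (tgt X e))) (carrier (egrp X e))"
    using bij_betw_inv_into[OF bij_betw_imageI[OF edgeD(11)[OF e_edges(1)] surj]] .
  then show ?thesis
    unfolding contract_transfer_def bij_betw_def by (intro comp_inj_on) (simp_all add: emb_rev_e(2))
qed

lemma contract_transfer_emb: "a \<in> carrier (egrp X e) \<Longrightarrow> contract_transfer X e (emb X e a) = emb X (rev X e) a"
  unfolding contract_transfer_def using edgeD(11)[OF e_edges(1)] by (simp add: inv_into_f_f)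

lemma contract_elem_hom:
  "v \<in> verts X \<Longrightarrow> contract_elem X e v \<in> hom (vgrp X v) (vgrp X (contract_vertex X e v))"
  using contract_transfer_hom by (cases "v = tgt X e") (simp_all add: contract_elem_def contract_vertex_def hom_def)

lemma contract_elem_inj: "inj_on (contract_elem X e v) (carrier (vgrp X v))"
  using contract_transfer_inj by (cases "v = tgt X e") (simp_all add: contract_elem_def)

lemma contract_elem_closed:
  "v \<in> verts X \<Longrightarrow> g \<in> carrier (vgrp X v) \<Longrightarrow> contract_elem X e v g \<in> carrier (vgrp X (contract_vertex X e v))"
  using contract_elem_hom by (auto simp: hom_def Pi_def)

lemma graph_of_groups_contract: "is_graph_of_groups X'"
  unfolding is_graph_of_groups_def
proof (intro conjI ballI)
  fix f assume "f \<in> edges X'"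
  then have f: "f \<in> edges X" "f \<notin> {e, rev X e}" by auto
  note Df = edgeD[OF f(1)]
  show "rev X' f \<in> edges X'" using Df rev_ne_e[OF f] by simp
  show "rev X' f \<noteq> f" "rev X' (rev X' f) = f" "tgt X' (rev X' f) = src X' f"
    "group (egrp X' f)" "egrp X' (rev X' f) = egrp X' f"
    using Df by simp_all
  show "src X' f \<in> verts X'" "tgt X' f \<in> verts X'" using contract_vertex_verts Df by auto
  show "emb X' f \<in> hom (egrp X' f) (vgrp X' (tgt X' f))"
    using hom_compose[OF Df(10) contract_elem_hom[OF Df(5)]] by simp
  have "emb X f ` carrier (egrp X f) \<subseteq> carrier (vgrp X (tgt X f))"
    using Df(10) by (auto simp: hom_def)
  then have "inj_on (contract_elem X e (tgt X f)) (emb X f ` carrier (egrp X f))"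
    using inj_on_subset[OF contract_elem_inj] by blast
  then show "inj_on (emb X' f) (carrier (egrp X' f))"
    using comp_inj_on[OF Df(11)] by simp
next
  fix v assume "v \<in> verts X'"
  then show "group (vgrp X' v)" using graph_of_groups_vertex_group[OF gog] by simp
qed

lemma contract_vertex_e_ends:
  "f \<in> {e, rev X e} \<Longrightarrow> contract_vertex X e (src X f) = contract_vertex X e (tgt X f)"
  using edgeD(6,7)[OF e_edges(1)] by (auto simp: contract_vertex_def)

lemma is_path_contract:
  "is_path X T u es w \<Longrightarrow>
   is_path X' T' (contract_vertex X e u) (filter (\<lambda>f. f \<notin> {e, rev X e}) es) (contract_vertex X e w)"
proof (induction es arbitrary: u)
  case Nil
  then show ?case using contract_vertex_verts by auto
next
  case (Cons f fs)
  then have "f \<in> T" "src X f = u" "is_path X T (tgt X f) fs w" by auto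
  then show ?case using Cons.IH contract_vertex_e_ends[of f] by (cases "f \<in> {e, rev X e}") auto
qed

lemma contracted_step_cases: "contracted_step X e x y \<in> {[], [e], [rev X e]}"
  by (simp add: contracted_step_def)

lemma is_path_contracted_step:
  assumes "x \<in> verts X" "y \<in> verts X" "contract_vertex X e x = contract_vertex X e y"
  shows "is_path X T x (contracted_step X e x y) y"
proof (cases "x = y")
  case True
  then show ?thesis using assms by (simp add: contracted_step_def)
next
  case False
  then have "(x = src X e \<and> y = tgt X e) \<or> (x = tgt X e \<and> y = src X e)"
    using assms(3) by (auto simp: contract_vertex_def split: if_splits)
  then show ?thesis
    using src_ne_tgt e_in_tree e_edges edgeD(4-7)[OF e_edges(1)] by (auto simp: contracted_step_def)
qed

lemma is_path_lift_edges:
  "is_path X' T' (contract_vertex X e x) fs w \<Longrightarrow> x \<in> verts X \<Longrightarrow>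
   \<exists>y. contract_vertex X e y = w \<and> is_path X T x (lift_edges X e x fs) y"
proof (induction fs arbitrary: x)
  case Nil
  then show ?case by auto
next
  case (Cons f fs)
  then have f: "f \<in> T'" "contract_vertex X e (src X f) = contract_vertex X e x"
    "is_path X' T' (contract_vertex X e (tgt X f)) fs w"
    by auto
  note Df = edgeD[of f]
  obtain y where y: "contract_vertex X e y = w" "is_path X T (tgt X f) (lift_edges X e (tgt X f) fs) y"
    using Cons.IH[OF f(3)] Df f(1) tree_edges by blast
  have "is_path X T x (contracted_step X e x (src X f)) (src X f)"
    using is_path_contracted_step[OF Cons.prems(2)] Df f tree_edges by auto
  moreover have "is_path X T (src X f) (f # lift_edges X e (tgt X f) fs) y" using y f by simp
  ultimately show ?case using y is_path_append by fastforce
qed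

abbreviation no_backtrack :: "'e \<Rightarrow> 'e \<Rightarrow> bool" where
  "no_backtrack p q \<equiv> q \<noteq> rev X p"

lemma no_backtrack_at_e:
  assumes "p \<in> {e, rev X e}" "f \<in> edges X" "f \<notin> {e, rev X e}"
  shows "no_backtrack p f \<and> no_backtrack f p"
proof -
  have "rev X p \<in> {e, rev X e}" using assms(1) edgeD(3)[OF e_edges(1)] by auto
  then show ?thesis using assms rev_ne_e[OF assms(2,3)] by auto
qed

lemma lift_edges_no_backtrack:
  "f \<in> edges X \<Longrightarrow> f \<notin> {e, rev X e} \<Longrightarrow> set fs \<subseteq> edges X - {e, rev X e} \<Longrightarrow>
   successively no_backtrack (f # fs) \<Longrightarrow> c \<in> {[], [e], [rev X e]} \<Longrightarrow>
   successively no_backtrack (f # lift_edges X e (tgt X f) fs @ c)"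
proof (induction fs arbitrary: f)
  case Nil
  then show ?case using no_backtrack_at_e[of _ f] by auto
next
  case (Cons g gs)
  have IH: "successively no_backtrack (g # lift_edges X e (tgt X g) gs @ c)"
    using Cons by auto
  have fg: "no_backtrack f g" using Cons.prems(4) by simp
  have g: "g \<in> edges X" "g \<notin> {e, rev X e}" using Cons.prems by auto
  consider "contracted_step X e (tgt X f) (src X g) = []"
    | p where "p \<in> {e, rev X e}" "contracted_step X e (tgt X f) (src X g) = [p]"
    using contracted_step_cases by blast
  then show ?case
  proof cases
    case 1
    then show ?thesis using IH fg by simp
  next
    case (2 p)
    then show ?thesis
      using IH no_backtrack_at_e[OF 2(1) Cons.prems(1,2)] no_backtrack_at_e[OF 2(1) g] by simp
  qed
qed

text \<open>A reduced circuit in the contracted tree would lift to one in \<open>T\<close>: the inserted edges \<open>e\<close>,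
  \<open>\<bar>e\<close> occur singly, each between two edges outside \<open>{e, \<bar>e}\<close>.\<close>

lemma contract_no_circuit:
  assumes "es \<noteq> []" "is_path X' T' v es v" "reduced_path X' es"
  shows False
proof -
  have v: "v \<in> verts X" "contract_vertex X e v = v" using is_path_end[OF assms(2)] by auto
  obtain y where y: "contract_vertex X e y = v" "is_path X T v (lift_edges X e v es) y"
    using is_path_lift_edges[of v es v] assms(2) v by auto
  have "y \<in> verts X" using is_path_end[OF y(2)] .
  then have "is_path X T y (contracted_step X e y v) v"
    using is_path_contracted_step[of y v] v y(1) by simp
  then have circuit: "is_path X T v (lift_edges X e v es @ contracted_step X e y v) v"
    using is_path_append[OF y(2)] by blast
  obtain f fs where es: "es = f # fs" using assms(1) by (cases es) auto
  have edges_es: "set es \<subseteq> edges X - {e, rev X e}"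
    using is_path_edges[OF assms(2)] tree_edges by auto
  have "successively no_backtrack es" using assms(3) by (simp add: reduced_path_def)
  then have "successively no_backtrack (f # lift_edges X e (tgt X f) fs @ contracted_step X e y v)"
    using lift_edges_no_backtrack[of f fs] edges_es es contracted_step_cases by auto
  moreover have "contracted_step X e v (src X f) \<in> {[], [e], [rev X e]}" by (rule contracted_step_cases)
  ultimately have "reduced_path X (lift_edges X e v es @ contracted_step X e y v)"
    using es no_backtrack_at_e[of _ f] edges_es
    by (auto simp: successively_append_iff reduced_path_def)
  then show False using circuit es tree unfolding spanning_tree_def by fastforce
qed

lemma spanning_tree_contract: "spanning_tree X' T'"
  unfolding spanning_tree_def
proof (intro conjI ballI)
  show "T' \<subseteq> edges X'" by (rule tree_edges(2))
  show "verts X' \<noteq> {}" using ends_verts by auto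
  show "\<not> (\<exists>v es. es \<noteq> [] \<and> is_path X' T' v es v \<and> reduced_path X' es)"
    using contract_no_circuit by blast
next
  fix f assume "f \<in> T'"
  then show "rev X' f \<in> T'"
    using rev_ne_e spanning_treeD(2)[OF tree] tree_edges by auto
next
  fix u w assume uw: "u \<in> verts X'" "w \<in> verts X'"
  then have "u \<in> verts X" "w \<in> verts X" by auto
  then obtain es where "is_path X T u es w"
    using tree unfolding spanning_tree_def by blast
  from is_path_contract[OF this] show "\<exists>es. is_path X' T' u es w" using uw by auto
qed

text \<open>In \<open>\<pi>\<^sub>1\<close>, \<open>e = 1\<close> turns the relation \<open>e a\<^sup>e \<bar>e = a\<^sup>\<bar>\<^sup>e\<close> into \<open>a\<^sup>e = a\<^sup>\<bar>\<^sup>e\<close>, identifying the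
  generators of \<open>\<Gamma>(t(e))\<close> with their transfers.\<close>

lemma fg_eq_contract_elem:
  assumes "v \<in> verts X" "g \<in> carrier (vgrp X v)"
  shows "fg_eq X T [VL (contract_vertex X e v) (contract_elem X e v g)] [VL v g]"
proof (cases "v = tgt X e")
  case True
  obtain a where a: "a \<in> carrier (egrp X e)" "g = emb X e a" using surj assms True by blast
  have ends: "src X e \<in> verts X" "tgt X e \<in> verts X" using edgeD(4,5)[OF e_edges(1)] by auto
  have "fg_eq X T ([] @ [EL e] @ [VL (tgt X e) g, EL (rev X e)]) ([] @ [] @ [VL (tgt X e) g, EL (rev X e)])"
    by (rule fg_eq.rel) (use e_in_tree e_edges ends assms True in \<open>auto intro: fg_rel.etree\<close>)
  moreover have "fg_eq X T ([VL (tgt X e) g] @ [EL (rev X e)] @ []) ([VL (tgt X e) g] @ [] @ [])"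
    by (rule fg_eq.rel) (use e_in_tree e_edges ends assms True in \<open>auto intro: fg_rel.etree\<close>)
  moreover have "fg_eq X T [EL e, VL (tgt X e) g, EL (rev X e)] [VL (src X e) (contract_transfer X e g)]"
    using fg_eq_of_rel[OF fg_rel.econj[OF e_edges(1) a(1)]] a contract_transfer_emb by simp
  ultimately show ?thesis
    using True by (auto simp: contract_elem_def contract_vertex_def intro: fg_eq.trans fg_eq.sym)
next
  case False
  then show ?thesis using assms by (simp add: contract_elem_def fg_eq.refl)
qed

lemma fg_eq_project_word: "valid_word X w \<Longrightarrow> fg_eq X T (project_word X e w) w"
proof (induction w)
  case Nil
  then show ?case by (simp add: fg_eq.refl)
next
  case (Cons l w)
  have "fg_eq X T (project_letter X e l) [l]"
  proof (cases l)
    case (VL v g)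
    then show ?thesis using fg_eq_contract_elem Cons.prems by simp
  next
    case (EL f)
    show ?thesis
    proof (cases "f \<in> {e, rev X e}")
      case True
      then have "fg_eq X T [EL f] []" using e_in_tree e_edges by (auto intro!: fg_eq_of_rel fg_rel.etree)
      then show ?thesis using EL True by (auto intro: fg_eq.sym)
    qed (use EL Cons.prems in \<open>auto intro: fg_eq.refl\<close>)
  qed
  then show ?case
    using fg_eq_append[OF gog tree_edges(1) _ Cons.IH, of "project_letter X e l" "[l]"] Cons.prems
    by simp
qed

lemma valid_word_project: "valid_word X w \<Longrightarrow> valid_word X' (project_word X e w)"
proof (induction w)
  case (Cons l w)
  then show ?case using contract_vertex_verts contract_elem_closed by (cases l) auto
qed simp

lemma valid_word_of_contract: "valid_word X' w \<Longrightarrow> valid_word X w"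
proof (induction w)
  case (Cons l w)
  then show ?case by (cases l) auto
qed simp

lemma project_word_contract: "valid_word X' w \<Longrightarrow> project_word X e w = w"
proof (induction w)
  case (Cons l w)
  then show ?case by (cases l) (auto simp: contract_elem_def)
qed simp

lemma fg_eq_of_contract_rel:
  assumes "fg_rel X' T' a b"
  shows "fg_eq X T a b"
  using assms
proof cases
  case (econj f x)
  then have f: "f \<in> edges X" "f \<notin> {e, rev X e}" and x: "x \<in> carrier (egrp X f)" by auto
  note Df = edgeD[OF f(1)]
  let ?a = "[EL f, VL (tgt X f) (emb X f x), EL (rev X f)]"
  let ?b = "[VL (src X f) (emb X (rev X f) x)]"
  have "valid_word X ?a" "valid_word X ?b"
    using fg_rel_valid[OF gog tree_edges(1) fg_rel.econj[OF f(1) x]] by auto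
  moreover have "a = project_word X e ?a" "b = project_word X e ?b"
    using econj f rev_ne_e[OF f] Df(6) by auto
  ultimately show ?thesis
    using fg_eq_project_word fg_eq_of_rel[OF fg_rel.econj[OF f(1) x]] by (blast intro: fg_eq.trans fg_eq.sym)
qed (auto intro!: fg_eq_of_rel fg_rel.intros)

lemma fg_eq_of_contract: "fg_eq X' T' a b \<Longrightarrow> fg_eq X T a b"
  using fg_eq_map[where F=id, OF _ valid_word_of_contract _ graph_of_groups_contract tree_edges(2)]
    fg_eq_of_contract_rel by simp

text \<open>For \<open>f \<in> {e, \<bar>e}\<close> both sides project to the same letter, because the transfer sends
  \<open>a\<^sup>e\<close> to \<open>a\<^sup>\<bar>\<^sup>e\<close>.\<close>

lemma fg_eq_project_econj:
  assumes f: "f \<in> edges X" and x: "x \<in> carrier (egrp X f)"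
  shows "fg_eq X' T' (project_word X e [EL f, VL (tgt X f) (emb X f x), EL (rev X f)])
    (project_word X e [VL (src X f) (emb X (rev X f) x)])"
proof -
  note De = edgeD[OF e_edges(1)]
  consider "f = e" | "f = rev X e" | "f \<notin> {e, rev X e}" by blast
  then show ?thesis
  proof cases
    case 1
    have "emb X (rev X e) x \<in> carrier (vgrp X (src X e))"
      using emb_rev_e(1) x 1 by (auto simp: hom_def)
    then show ?thesis using 1 x ends_verts src_ne_tgt contract_transfer_emb
      by (auto simp: contract_elem_def intro!: fg_eq.refl)
  next
    case 2
    then have x: "x \<in> carrier (egrp X e)" using x De(9) by simp
    then have "emb X (rev X e) x \<in> carrier (vgrp X (src X e))"
      using emb_rev_e(1) by (auto simp: hom_def)
    then show ?thesis using 2 x De(3,6,7) ends_verts src_ne_tgt contract_transfer_emb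
      by (auto simp: contract_elem_def intro!: fg_eq.refl)
  next
    case 3
    have "fg_rel X' T' [EL f, VL (tgt X' f) (emb X' f x), EL (rev X' f)]
        [VL (src X' f) (emb X' (rev X' f) x)]"
      using f x 3 by (intro fg_rel.econj) auto
    then show ?thesis using 3 rev_ne_e[OF f 3] edgeD(6)[OF f] by (auto intro!: fg_eq_of_rel)
  qed
qed

lemma fg_eq_project_rel:
  assumes "fg_rel X T a b"
  shows "fg_eq X' T' (project_word X e a) (project_word X e b)"
  using assms
proof cases
  case (vmult v g h)
  have "contract_elem X e v (g \<otimes>\<^bsub>vgrp X v\<^esub> h) =
      contract_elem X e v g \<otimes>\<^bsub>vgrp X (contract_vertex X e v)\<^esub> contract_elem X e v h"
    using hom_mult[OF contract_elem_hom] vmult by blast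
  then show ?thesis
    using vmult contract_vertex_verts contract_elem_closed
    by (auto intro!: fg_eq_of_rel fg_rel.vmult[of _ X', simplified])
next
  case (vone v)
  have "contract_elem X e v \<one>\<^bsub>vgrp X v\<^esub> = \<one>\<^bsub>vgrp X (contract_vertex X e v)\<^esub>"
    using hom_one[OF contract_elem_hom] graph_of_groups_vertex_group[OF gog] contract_vertex_verts vone
    by auto
  then show ?thesis
    using vone contract_vertex_verts by (auto intro!: fg_eq_of_rel fg_rel.vone[of _ X', simplified])
next
  case (einv f)
  show ?thesis
  proof (cases "f \<in> {e, rev X e}")
    case True
    then have "rev X f \<in> {e, rev X e}" using edgeD(3)[OF e_edges(1)] by auto
    then show ?thesis using einv True by (auto intro: fg_eq.refl)
  next
    case False
    then show ?thesis using einv rev_ne_e[OF einv(3) False]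
      by (auto intro!: fg_eq_of_rel fg_rel.einv[of _ X', simplified])
  qed
next
  case (etree f)
  show ?thesis
  proof (cases "f \<in> {e, rev X e}")
    case True
    then show ?thesis using etree by (auto intro: fg_eq.refl)
  next
    case False
    then show ?thesis using etree by (auto intro!: fg_eq_of_rel fg_rel.etree)
  qed
next
  case (econj f x)
  then show ?thesis using fg_eq_project_econj by simp
qed

lemma fg_eq_project: "fg_eq X T a b \<Longrightarrow> fg_eq X' T' (project_word X e a) (project_word X e b)"
  using fg_eq_map[where F="project_word X e", OF _ valid_word_project _ gog tree_edges(1)]
    fg_eq_project_rel by simp

lemma fund_group_contract_iso: "fund_group X' T' \<cong> fund_group X T"
  by (rule fund_group_iso_by_word_maps[OF graph_of_groups_contract tree_edges(2) gog tree_edges(1),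
        of id "project_word X e"])
     (auto simp: valid_word_of_contract fg_eq_of_contract valid_word_project fg_eq_project
        project_word_contract fg_eq_project_word fg_eq.refl)

lemma card_verts_contract: "finite (verts X) \<Longrightarrow> card (verts X') < card (verts X)"
  using card_Diff1_less[OF _ ends_verts(2)] by (simp only: contract_simps(1))

end

lemma F1_contract: "F1 X \<Longrightarrow> F1 (contract X e)"
  by (simp add: F1_def)

lemma F2_contract: "F2 X \<Longrightarrow> F2 (contract X e)"
  by (simp add: F2_def)

definition proper_tree_edges :: "('v, 'e, 'g) graph_of_groups \<Rightarrow> 'e set \<Rightarrow> bool" where
  "proper_tree_edges Y T \<longleftrightarrow> (\<forall>e\<in>T. emb Y e ` carrier (egrp Y e) \<noteq> carrier (vgrp Y (tgt Y e)))"

lemma proper_tree_edgesD: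
  assumes "is_graph_of_groups Y" "spanning_tree Y T" "proper_tree_edges Y T" "e \<in> T"
  shows "emb Y e ` carrier (egrp Y e) \<noteq> carrier (vgrp Y (tgt Y e)) \<and>
    emb Y (rev Y e) ` carrier (egrp Y e) \<noteq> carrier (vgrp Y (src Y e))"
proof
  show "emb Y e ` carrier (egrp Y e) \<noteq> carrier (vgrp Y (tgt Y e))"
    using assms(3,4) unfolding proper_tree_edges_def by blast
  have "rev Y e \<in> T" using spanning_treeD(2)[OF assms(2,4)] .
  then have "emb Y (rev Y e) ` carrier (egrp Y (rev Y e)) \<noteq> carrier (vgrp Y (tgt Y (rev Y e)))"
    using assms(3) unfolding proper_tree_edges_def by blast
  moreover have "e \<in> edges Y" using spanning_treeD(1)[OF assms(2)] assms(4) by blast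
  ultimately show "emb Y (rev Y e) ` carrier (egrp Y e) \<noteq> carrier (vgrp Y (src Y e))"
    using graph_of_groupsD(6,9)[OF assms(1)] by simp
qed

lemma contract_to_proper_tree_edges:
  fixes X :: "('v, 'e, 'g) graph_of_groups"
  assumes "is_graph_of_groups X" "finite (verts X)" "spanning_tree X T"
  shows "\<exists>(Y :: ('v, 'e, 'g) graph_of_groups) T'.
    is_graph_of_groups Y \<and> finite (verts Y) \<and> spanning_tree Y T' \<and>
    fund_group Y T' \<cong> fund_group X T \<and> proper_tree_edges Y T' \<and> (F1 X \<longrightarrow> F1 Y) \<and> (F2 X \<longrightarrow> F2 Y)"
  using assms
proof (induction "card (verts X)" arbitrary: X T rule: less_induct)
  case less
  show ?case
  proof (cases "proper_tree_edges X T")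
    case True
    then show ?thesis
      using less.prems iso_refl[of "fund_group X T"] by (intro exI[of _ X] exI[of _ T]) simp
  next
    case False
    then obtain e where "e \<in> T" "emb X e ` carrier (egrp X e) = carrier (vgrp X (tgt X e))"
      unfolding proper_tree_edges_def by blast
    then interpret surjective_tree_edge X T e
      using less.prems by unfold_locales
    have "finite (verts X')" using less.prems(2) by simp
    then obtain Y :: "('v, 'e, 'g) graph_of_groups" and T'' where
      Y: "is_graph_of_groups Y" "finite (verts Y)" "spanning_tree Y T''" "proper_tree_edges Y T''"
      "fund_group Y T'' \<cong> fund_group X' T'" "F1 X' \<longrightarrow> F1 Y" "F2 X' \<longrightarrow> F2 Y"
      using less.hyps[OF card_verts_contract[OF less.prems(2)] graph_of_groups_contract _ spanning_tree_contract]
      by blast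
    moreover have "fund_group Y T'' \<cong> fund_group X T"
      using iso_trans[OF Y(5) fund_group_contract_iso] .
    moreover have "F1 X \<longrightarrow> F1 Y" "F2 X \<longrightarrow> F2 Y"
      using Y(6,7) F1_contract[of X e] F2_contract[of X e] by simp_all
    ultimately show ?thesis by (intro exI[of _ Y] exI[of _ T'']) simp
  qed
qed

theorem lemma3p1:
  fixes X :: "('v, 'e, 'g) graph_of_groups" and T0 :: "'e set"
  assumes "is_graph_of_groups X"
    and "connected_gog X"
    and "finite (verts X)"
    and "spanning_tree X T0"
  shows "\<exists>(Y :: ('v, 'e, 'g) graph_of_groups) T.
           is_graph_of_groups Y \<and> finite (verts Y) \<and> spanning_tree Y T \<and>
           fund_group Y T \<cong> fund_group X T0 \<and>
           (\<forall>e\<in>T. emb Y e ` carrier (egrp Y e) \<noteq> carrier (vgrp Y (tgt Y e)) \<and>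
                   emb Y (rev Y e) ` carrier (egrp Y e) \<noteq> carrier (vgrp Y (src Y e))) \<and>
           (F1 X \<longrightarrow> F1 Y) \<and> (F2 X \<longrightarrow> F2 Y)"
proof -
  obtain Y :: "('v, 'e, 'g) graph_of_groups" and T where
    Y: "is_graph_of_groups Y" "finite (verts Y)" "spanning_tree Y T" "proper_tree_edges Y T"
    "fund_group Y T \<cong> fund_group X T0" "F1 X \<longrightarrow> F1 Y" "F2 X \<longrightarrow> F2 Y"
    using contract_to_proper_tree_edges[OF assms(1,3,4)] by blast
  then show ?thesis using proper_tree_edgesD[OF Y(1,3,4)] by (intro exI[of _ Y] exI[of _ T]) simp
qed

end
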